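(* Fix $n\in\mathbb N$, $z=x+iy\in\mathbb H$ and a simple type cusp $\mathfrak c$ of $\Gamma_n$. Let $z'=x'+iy'\in\mathbb H$ be such that $\Gamma_nz=\Gamma_n\tau_{\mathfrak c}z'$. Then $$\mathcal R_n(x,y)=\bigcup_{d\mid n}\mathcal R^{\rm pr}_{n/d}\left(x'_{\mathfrak c,d},\ d^2y'/\omega_{\mathfrak c}\right)$$ for some $x'_{\mathfrak c,d}\in\mathbb R/\mathbb Z$ depending only on $x'$, $\mathfrak c$ and $d$.
   Context: $\Gamma_1=\mathrm{SL}_2(\mathbb Z)$ and $\Gamma_n=\left\{\begin{pmatrix}a&b\\c&d\end{pmatrix}\in\Gamma_1:n^2\mid c,\ a\equiv d\equiv\pm1\pmod n\right\}$. Cusps of $\Gamma_n$ are $\Gamma_n$-orbits in $\mathbb Q\cup\{\infty\}$; a cusp is of simple type if it has a representative $m/q$ with $\gcd(m,q)=1$ and $\gcd(n^2,q)\mid n$. For a cusp $\mathfrak c$, $\tau_{\mathfrak c}\in\Gamma_1$ satisfies $\tau_{\mathfrak c}\infty=\mathfrak c$, and the width $\omega_{\mathfrak c}$ is the positive integer with $\tau_{\mathfrak c}^{-1}(\tau_{\mathfrak c}N\tau_{\mathfrak c}^{-1}\cap\Gamma_n)\tau_{\mathfrak c}=\langle\begin{pmatrix}1&\omega_{\mathfrak c}\\0&1\end{pmatrix}\rangle$, $N$ the upper-triangular unipotent subgroup (for $\mathfrak c=m/l$ in lowest terms, $\omega_{\mathfrak c}=n^2/\gcd(n,l)^2$). For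 $n\in\mathbb N$, $x\in\mathbb R/\mathbb Z$, $y>0$, in $\mathcal M=\Gamma_1\backslash\mathbb H$: $\mathcal R_n(x,y)=\{\Gamma_1(x+\tfrac jn+iy):0\le j\le n-1\}$, $\mathcal R^{\rm pr}_n(x,y)=\{\Gamma_1(x+\tfrac jn+iy):j\in(\mathbb Z/n\mathbb Z)^\times\}$ (with $(\mathbb Z/1\mathbb Z)^\times=\{0\}$). *)

theory Defs
  imports Complex_Main
begin

text \<open>2x2 integer matrices (a,b,c,d) standing for [[a,b],[c,d]].\<close>
type_synonym mat2 = "int \<times> int \<times> int \<times> int"

definition mmult :: "mat2 \<Rightarrow> mat2 \<Rightarrow> mat2" where
  "mmult A B = (case A of (a,b,c,d) \<Rightarrow> case B of (a',b',c',d') \<Rightarrow>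
     (a*a' + b*c', a*b' + b*d', c*a' + d*c', c*b' + d*d'))"

definition SL2Z :: "mat2 set" where
  "SL2Z = {(a,b,c,d). a*d - b*c = 1}"

definition minv :: "mat2 \<Rightarrow> mat2" where
  "minv A = (case A of (a,b,c,d) \<Rightarrow> (d, -b, -c, a))"

definition Gamma :: "nat \<Rightarrow> mat2 set" where
  "Gamma n = {(a,b,c,d). (a,b,c,d) \<in> SL2Z \<and> int n ^ 2 dvd c \<and>
     ((a mod int n = 1 mod int n \<and> d mod int n = 1 mod int n) \<or>
      (a mod int n = (-1) mod int n \<and> d mod int n = (-1) mod int n))}"

definition mob :: "mat2 \<Rightarrow> complex \<Rightarrow> complex" where
  "mob A z = (case A of (a,b,c,d) \<Rightarrow> (of_int a * z + of_int b) / (of_int c * z + of_int d))"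

definition orbit :: "mat2 set \<Rightarrow> complex \<Rightarrow> complex set" where
  "orbit G z = {mob g z | g. g \<in> G}"

text \<open>Simple type: the cusp Gamma_n (tau infinity) has a representative m/q (m,q coprime)
  with gcd(n^2,q) | n. Representatives of this cusp are exactly (gamma tau) infinity for
  gamma in Gamma_n, i.e. the first column (m,q) of gamma*tau (automatically coprime).\<close>
definition simple_type :: "nat \<Rightarrow> mat2 \<Rightarrow> bool" where
  "simple_type n \<tau> = (\<exists>\<gamma>\<in>Gamma n. case mmult \<gamma> \<tau> of (m,b,q,d) \<Rightarrow> gcd (int n ^ 2) q dvd int n)"

definition Tk :: "int \<Rightarrow> mat2" where
  "Tk k = (1, k, 0, 1)"

text \<open>Width: the positive integer omega such that
  tau^-1 (tau N tau^-1 \<inter> Gamma_n) tau = <T^omega>.\<close>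
definition width :: "nat \<Rightarrow> mat2 \<Rightarrow> nat" where
  "width n \<tau> = (THE \<omega>::nat. \<omega> > 0 \<and>
     {k::int. mmult (mmult \<tau> (Tk k)) (minv \<tau>) \<in> Gamma n} = {int \<omega> * j | j. True})"

text \<open>Points of M = Gamma_1 \ H as Gamma_1-orbits.\<close>
definition R :: "nat \<Rightarrow> real \<Rightarrow> real \<Rightarrow> complex set set" where
  "R n x y = {orbit SL2Z (Complex (x + real j / real n) y) | j. j < n}"

definition Rpr :: "nat \<Rightarrow> real \<Rightarrow> real \<Rightarrow> complex set set" where
  "Rpr n x y = {orbit SL2Z (Complex (x + real j / real n) y) | j. j < n \<and> coprime j n}"

end

(*
  Pick gamma in Gamma_n such that gamma tau = (m b; q e) has gcd(n^2, q) | n, and write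
  g = gcd(n, q), n = g n1, q = g q1; then q1 is prime to n and the width of the cusp is n1^2.
  The set R_n(z) only depends on the Gamma_n-orbit of z, since conjugating Gamma_n by the
  translation by j/n stays inside SL2(Z); so z may be replaced by w = gamma tau z'.
  For each j, the matrix (n j; 0 n)(m b; q e) of determinant n^2 factors as
  sigma (g d, d e u + n1 k; 0, (n/d) n1) with sigma in SL2(Z), where d = gcd(n1 m + j q1, n),
  u inverts q1 modulo n^2 and k is a unit modulo n/d determined by n1 m + j q1 = d r and
  q1 k r = -1 (mod n/d). Hence w + j/n is SL2(Z)-equivalent to
  x'_{c,d} + k/(n/d) + i d^2 y'/n1^2, and conversely every pair (d, k) arises from some j.
*)
theory Submission
  imports Defs "HOL-Number_Theory.Number_Theory"
begin

lemma int_eq_mult_div: "d dvd n \<Longrightarrow> int n = int d * int (n div d)"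
  by (simp flip: of_nat_mult)

lemma square_dvd_mult_square_iff:
  fixes N q k :: int
  assumes "N \<noteq> 0"
  shows "N\<^sup>2 dvd k * q\<^sup>2 \<longleftrightarrow> (N div gcd N q)\<^sup>2 dvd k"
proof -
  define g where "g = gcd N q"
  have "g \<noteq> 0"
    using assms unfolding g_def by simp
  obtain N' q' where N: "N = g * N'" and q: "q = g * q'" and "coprime N' q'"
    using gcd_coprime_exists[of N q] assms unfolding g_def by (auto simp: mult.commute)
  have "N\<^sup>2 dvd k * q\<^sup>2 \<longleftrightarrow> g\<^sup>2 * N'\<^sup>2 dvd g\<^sup>2 * (k * q'\<^sup>2)"
    by (simp add: N q power_mult_distrib ac_simps)
  also have "\<dots> \<longleftrightarrow> N'\<^sup>2 dvd k * q'\<^sup>2"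
    using \<open>g \<noteq> 0\<close> by simp
  also have "\<dots> \<longleftrightarrow> N'\<^sup>2 dvd k"
    using \<open>coprime N' q'\<close> by (simp add: coprime_dvd_mult_left_iff)
  also have "N' = N div gcd N q"
    unfolding g_def[symmetric] using \<open>g \<noteq> 0\<close> N by simp
  finally show ?thesis .
qed

lemma coprime_div_gcd_if_gcd_square_dvd:
  fixes N q :: int
  assumes "N \<noteq> 0" and "gcd (N\<^sup>2) q dvd N"
  shows "coprime (q div gcd N q) N"
proof -
  define g where "g = gcd N q"
  define h where "h = gcd (q div g) N"
  have "g \<noteq> 0"
    using assms(1) unfolding g_def by simp
  have "g * h dvd N * N"
    unfolding g_def h_def by (intro mult_dvd_mono) simp_all
  moreover have "g * h dvd g * (q div g)"
    unfolding h_def by simp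
  ultimately have "g * h dvd gcd (N\<^sup>2) q"
    unfolding g_def by (simp add: power2_eq_square)
  also have "gcd (N\<^sup>2) q dvd g"
    using assms(2) unfolding g_def by simp
  finally have "h dvd 1"
    using \<open>g \<noteq> 0\<close> by (metis dvd_mult_cancel_left mult.right_neutral)
  then show ?thesis
    unfolding h_def g_def by (simp add: coprime_iff_gcd_eq_1)
qed

lemma cong_solve_coprime_below:
  fixes a c :: int and p :: nat
  assumes "coprime a (int p)" and "p > 0"
  shows "\<exists>x<p. [a * int x = c] (mod int p)"
proof -
  obtain y where "[a * y = 1] (mod int p)"
    using cong_solve_coprime_int[OF assms(1)] by blast
  then have "[a * ((y * c) mod int p) = c] (mod int p)"
    using cong_scalar_right[of "a * y" 1 "int p" c] by (simp add: cong_def mod_mult_right_eq mult.assoc)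
  moreover have "0 \<le> (y * c) mod int p" and "(y * c) mod int p < int p"
    using assms(2) by simp_all
  ultimately show ?thesis
    by (intro exI[of _ "nat ((y * c) mod int p)"]) auto
qed

section \<open>The modular group and its action on the upper half plane\<close>

lemma SL2Z_minv: "A \<in> SL2Z \<Longrightarrow> minv A \<in> SL2Z"
  by (cases A) (auto simp: SL2Z_def minv_def algebra_simps)

lemma mmult_minv_left: "A \<in> SL2Z \<Longrightarrow> mmult (minv A) A = (1, 0, 0, 1)"
  by (cases A) (auto simp: SL2Z_def minv_def mmult_def algebra_simps)

lemma det_mmult:
  "mmult (a, b, c, d) (a', b', c', d') = (p, q, r, s) \<Longrightarrow> p * s - q * r = (a * d - b * c) * (a' * d' - b' * c')"
  unfolding mmult_def by (auto simp: algebra_simps)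

lemma SL2Z_mmult: "A \<in> SL2Z \<Longrightarrow> B \<in> SL2Z \<Longrightarrow> mmult A B \<in> SL2Z"
  by (cases A; cases B; cases "mmult A B") (auto simp: SL2Z_def dest: det_mmult)

lemma SL2Z_left_factor:
  fixes A B D r t p11 p12 p21 p22 :: int
  assumes "A * D \<noteq> 0" and "p11 * p22 - p12 * p21 = A * D"
    and "p11 = r * A" and "p21 = t * A" and "D dvd p12 - r * B" and "D dvd p22 - t * B"
  shows "\<exists>\<sigma>\<in>SL2Z. mmult \<sigma> (A, B, 0, D) = (p11, p12, p21, p22)"
proof -
  obtain s v where s: "p12 - r * B = D * s" and v: "p22 - t * B = D * v"
    using assms(5,6) by (auto simp: dvd_def)
  have prod: "mmult (r, s, t, v) (A, B, 0, D) = (p11, p12, p21, p22)"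
    using assms(3,4) s v by (simp add: mmult_def algebra_simps)
  have "(r * v - s * t) * (A * D) = 1 * (A * D)"
    using det_mmult[OF prod] assms(2) by simp
  then have "(r, s, t, v) \<in> SL2Z"
    using assms(1) unfolding SL2Z_def by simp
  with prod show ?thesis
    by blast
qed

lemma mob_id: "mob (1, 0, 0, 1) z = z"
  by (simp add: mob_def)

lemma mob_mmult:
  assumes "of_int c * z + of_int d \<noteq> 0"
  shows "mob (mmult A (a, b, c, d)) z = mob A (mob (a, b, c, d) z)"
proof (cases A)
  case (fields a' b' c' d')
  with assms show ?thesis
    by (simp add: mob_def mmult_def divide_simps) (simp add: algebra_simps)
qed

lemma SL2Z_denominator_nonzero:
  assumes "(a, b, c, d) \<in> SL2Z" and "Im z \<noteq> 0"
  shows "of_int c * z + of_int d \<noteq> 0"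
proof
  assume zero: "of_int c * z + of_int d = 0"
  then have "Im (of_int c * z + of_int d) = 0"
    by simp
  then have "c = 0"
    using \<open>Im z \<noteq> 0\<close> by simp
  with zero assms(1) show False
    by (simp add: SL2Z_def)
qed

lemma Im_mob:
  "Im (mob (a, b, c, d) z) = of_int (a * d - b * c) * Im z / (cmod (of_int c * z + of_int d))\<^sup>2"
  unfolding mob_def by (simp add: Im_divide' algebra_simps)

lemma Im_mob_SL2Z_pos:
  assumes "A \<in> SL2Z" and "Im z > 0"
  shows "Im (mob A z) > 0"
proof (cases A)
  case (fields a b c d)
  with assms have "of_int c * z + of_int d \<noteq> 0"
    by (intro SL2Z_denominator_nonzero) auto
  with assms fields show ?thesis
    by (simp add: Im_mob SL2Z_def)
qed

lemma mob_mmult_SL2Z: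
  assumes "B \<in> SL2Z" and "Im z > 0"
  shows "mob (mmult A B) z = mob A (mob B z)"
  using assms by (cases B) (simp add: mob_mmult SL2Z_denominator_nonzero)

lemma mob_minv:
  assumes "A \<in> SL2Z" and "Im z > 0"
  shows "mob (minv A) (mob A z) = z"
  using mob_mmult_SL2Z[OF assms, of "minv A"] by (simp add: mmult_minv_left[OF assms(1)] mob_id)

lemma orbit_SL2Z_mob_subset:
  assumes "\<sigma> \<in> SL2Z" and "Im u > 0"
  shows "orbit SL2Z (mob \<sigma> u) \<subseteq> orbit SL2Z u"
proof
  fix v
  assume "v \<in> orbit SL2Z (mob \<sigma> u)"
  then obtain \<gamma> where "\<gamma> \<in> SL2Z" and "v = mob \<gamma> (mob \<sigma> u)"
    unfolding orbit_def by auto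
  then have "mmult \<gamma> \<sigma> \<in> SL2Z" and "v = mob (mmult \<gamma> \<sigma>) u"
    using assms by (simp_all add: SL2Z_mmult mob_mmult_SL2Z)
  then show "v \<in> orbit SL2Z u"
    unfolding orbit_def by blast
qed

lemma orbit_SL2Z_mob:
  assumes "\<sigma> \<in> SL2Z" and "Im u > 0"
  shows "orbit SL2Z (mob \<sigma> u) = orbit SL2Z u"
proof
  show "orbit SL2Z u \<subseteq> orbit SL2Z (mob \<sigma> u)"
    using orbit_SL2Z_mob_subset[OF SL2Z_minv[OF assms(1)] Im_mob_SL2Z_pos[OF assms]]
    by (simp add: mob_minv assms)
qed (rule orbit_SL2Z_mob_subset[OF assms])

section \<open>Invariance of R_n under Gamma_n\<close>

lemma Gamma_SL2Z: "h \<in> Gamma n \<Longrightarrow> h \<in> SL2Z"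
  by (cases h) (simp add: Gamma_def)

lemma one_in_Gamma: "(1, 0, 0, 1) \<in> Gamma n"
  by (simp add: Gamma_def SL2Z_def)

lemma mob_translate_conj:
  fixes s :: complex
  assumes "of_int c * u + of_int d \<noteq> 0"
    and "of_int a' = of_int a + s * of_int c"
    and "of_int b' = of_int b + s * (of_int d - of_int a) - s\<^sup>2 * of_int c"
    and "of_int d' = of_int d - s * of_int c"
  shows "mob (a', b', c, d') (u + s) = mob (a, b, c, d) u + s"
proof -
  let ?D = "of_int c * u + of_int d"
  have "of_int c * (u + s) + of_int d' = ?D"
    unfolding assms(4) by (simp add: algebra_simps)
  moreover have "of_int a' * (u + s) + of_int b' = of_int a * u + of_int b + s * ?D"
    unfolding assms(2,3) by (simp add: algebra_simps power2_eq_square)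
  ultimately have "mob (a', b', c, d') (u + s) = (of_int a * u + of_int b + s * ?D) / ?D"
    unfolding mob_def by simp
  with assms(1) show ?thesis
    unfolding mob_def by (simp add: add_divide_distrib)
qed

text \<open>Conjugating h by the translation by j/n gives an integral matrix, because n^2 divides
  the lower left entry of h and n divides the difference of its diagonal entries.\<close>
lemma Gamma_translate_conj:
  fixes j :: nat
  assumes "h \<in> Gamma n" and "n \<ge> 1" and "Im u > 0"
  defines "s \<equiv> of_real (real j / real n) :: complex"
  shows "\<exists>\<sigma>\<in>SL2Z. mob \<sigma> (u + s) = mob h u + s"
proof (cases h)
  case (fields a b c d)
  define N where "N = int n"
  have det: "a * d - b * c = 1" and "N\<^sup>2 dvd c" and "a mod N = d mod N"
    using assms(1) fields unfolding Gamma_def SL2Z_def N_def by auto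
  then obtain c' t where c: "c = N\<^sup>2 * c'" and "d - a = N * t"
    by (metis dvdE mod_eq_dvd_iff)
  then have d: "d = a + N * t"
    by simp
  define J where "J = int j"
  have sN: "s * of_int N = of_int J"
    using assms(2) unfolding s_def N_def J_def by (simp add: field_simps)
  have sc: "s * of_int c = of_int (J * N * c')"
    by (simp add: c power2_eq_square flip: sN)
  have sda: "s * (of_int d - of_int a) = of_int (J * t)"
    using sN by (simp add: d mult.assoc flip: mult.assoc[of s])
  have ssc: "s\<^sup>2 * of_int c = of_int (J\<^sup>2 * c')"
    using sN by (simp add: c power2_eq_square) (metis mult.assoc mult.commute)
  define \<sigma> where "\<sigma> = (a + J * N * c', b + J * t - J\<^sup>2 * c', c, d - J * N * c')"
  have "of_int c * u + of_int d \<noteq> 0"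
    using assms(1,3) fields by (intro SL2Z_denominator_nonzero Gamma_SL2Z) auto
  then have mob_\<sigma>: "mob \<sigma> (u + s) = mob h u + s"
    unfolding \<sigma>_def fields by (rule mob_translate_conj) (simp_all add: sc sda ssc)
  have "(a + J * N * c') * (d - J * N * c') - (b + J * t - J\<^sup>2 * c') * c = a * d - b * c"
    by (simp add: c d algebra_simps power2_eq_square)
  then have "\<sigma> \<in> SL2Z"
    using det unfolding \<sigma>_def SL2Z_def by simp
  with mob_\<sigma> show ?thesis
    by blast
qed

lemma R_conv_translates:
  "R n (Re w) (Im w) = {orbit SL2Z (w + of_real (real j / real n)) | j. j < n}"
proof -
  have translate: "Complex (Re w + t) (Im w) = w + of_real t" for t
    by (simp add: complex_eq_iff)
  show ?thesis
    unfolding R_def by (simp only: translate)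
qed

lemma R_Gamma_invariant:
  assumes "h \<in> Gamma n" and "n \<ge> 1" and "Im u > 0"
  shows "R n (Re (mob h u)) (Im (mob h u)) = R n (Re u) (Im u)"
proof -
  have translate: "orbit SL2Z (mob h u + of_real (real j / real n)) = orbit SL2Z (u + of_real (real j / real n))"
    for j :: nat
  proof -
    let ?s = "of_real (real j / real n) :: complex"
    obtain \<sigma> where \<sigma>_SL2Z: "\<sigma> \<in> SL2Z" and \<sigma>: "mob \<sigma> (u + ?s) = mob h u + ?s"
      using Gamma_translate_conj[OF assms, of j] by blast
    have "Im (u + ?s) > 0"
      using assms(3) by simp
    with \<sigma>_SL2Z have "orbit SL2Z (mob \<sigma> (u + ?s)) = orbit SL2Z (u + ?s)"
      by (rule orbit_SL2Z_mob)
    then show ?thesis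
      by (simp only: \<sigma>)
  qed
  show ?thesis
    unfolding R_conv_translates by (simp only: translate)
qed

lemma self_in_orbit: "(1, 0, 0, 1) \<in> G \<Longrightarrow> z \<in> orbit G z"
  unfolding orbit_def mem_Collect_eq by (intro exI[of _ "(1, 0, 0, 1)"]) (simp add: mob_id)

lemma R_orbit_Gamma_eq:
  assumes "n \<ge> 1" and "Im v > 0" and "orbit (Gamma n) z = orbit (Gamma n) v"
  shows "R n (Re z) (Im z) = R n (Re v) (Im v)"
proof -
  have "z \<in> orbit (Gamma n) v"
    using self_in_orbit[OF one_in_Gamma] assms(3) by blast
  then obtain h where "h \<in> Gamma n" and "z = mob h v"
    unfolding orbit_def by blast
  then show ?thesis
    using R_Gamma_invariant[OF _ assms(1,2)] by blast
qed

section \<open>Width of a cusp\<close>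

lemma conj_Tk:
  assumes "(a, b, c, d) \<in> SL2Z"
  shows "mmult (mmult (a, b, c, d) (Tk k)) (minv (a, b, c, d)) = (1 - k * a * c, k * a\<^sup>2, - k * c\<^sup>2, 1 + k * a * c)"
  using assms unfolding SL2Z_def mmult_def Tk_def minv_def
  by (simp add: algebra_simps power2_eq_square)

lemma conj_Tk_in_Gamma_iff:
  assumes "(a, b, c, d) \<in> SL2Z" and "n \<ge> 1"
  shows "mmult (mmult (a, b, c, d) (Tk k)) (minv (a, b, c, d)) \<in> Gamma n \<longleftrightarrow>
    (int n div gcd (int n) c)\<^sup>2 dvd k"
proof -
  let ?N = "int n"
  have "?N \<noteq> 0"
    using assms(2) by simp
  have "?N dvd k * a * c" if "?N\<^sup>2 dvd k * c\<^sup>2"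
  proof -
    have "(?N div gcd ?N c)\<^sup>2 dvd k"
      using that square_dvd_mult_square_iff[OF \<open>?N \<noteq> 0\<close>] by simp
    then obtain t where "k = (?N div gcd ?N c)\<^sup>2 * t" ..
    then have "k * a * c = (?N div gcd ?N c * c) * (?N div gcd ?N c * t * a)"
      by (simp add: power2_eq_square algebra_simps)
    also have "?N div gcd ?N c * c = ?N * (c div gcd ?N c)"
      by (simp add: div_mult_swap dvd_div_mult)
    finally have "k * a * c = ?N * (c div gcd ?N c * (?N div gcd ?N c * t * a))"
      by simp
    then show ?thesis
      by (rule dvdI)
  qed
  moreover have "mmult (mmult (a, b, c, d) (Tk k)) (minv (a, b, c, d)) \<in> SL2Z"
    using assms(1) by (intro SL2Z_mmult SL2Z_minv) (auto simp: Tk_def SL2Z_def)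
  ultimately have "mmult (mmult (a, b, c, d) (Tk k)) (minv (a, b, c, d)) \<in> Gamma n \<longleftrightarrow>
      ?N\<^sup>2 dvd k * c\<^sup>2"
    unfolding conj_Tk[OF assms(1)] Gamma_def by (auto simp: mod_eq_dvd_iff)
  then show ?thesis
    using square_dvd_mult_square_iff[OF \<open>?N \<noteq> 0\<close>] by simp
qed

lemma width_eqI:
  assumes "\<omega> > 0" and "\<And>k. mmult (mmult \<tau> (Tk k)) (minv \<tau>) \<in> Gamma n \<longleftrightarrow> int \<omega> dvd k"
  shows "width n \<tau> = \<omega>"
  unfolding width_def
proof (rule the_equality)
  have "{int \<omega> * j | j. True} = {k. int \<omega> dvd k}"
    by (auto elim: dvdE)
  then show "\<omega> > 0 \<and> {k. mmult (mmult \<tau> (Tk k)) (minv \<tau>) \<in> Gamma n} = {int \<omega> * j | j. True}"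
    using assms by simp
next
  fix \<omega>'
  assume "\<omega>' > 0 \<and> {k. mmult (mmult \<tau> (Tk k)) (minv \<tau>) \<in> Gamma n} = {int \<omega>' * j | j. True}"
  then have eq: "{k. int \<omega> dvd k} = {int \<omega>' * j | j. True}"
    using assms(2) by simp
  have "int \<omega>' \<in> {int \<omega>' * j | j. True}" and "int \<omega> \<in> {k. int \<omega> dvd k}"
    by force+
  then have "int \<omega>' \<in> {k. int \<omega> dvd k}" and "int \<omega> \<in> {int \<omega>' * j | j. True}"
    unfolding eq .
  then have "int \<omega> dvd int \<omega>'" and "int \<omega>' dvd int \<omega>"
    by (auto simp: dvd_def)
  then show "\<omega>' = \<omega>"
    by (metis dvd_antisym of_nat_dvd_iff)
qed

lemma width_SL2Z:
  assumes "(a, b, c, d) \<in> SL2Z" and "n \<ge> 1"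
  shows "int (width n (a, b, c, d)) = (int n div gcd (int n) c)\<^sup>2"
proof -
  have "int n div gcd (int n) c > 0"
    using assms(2) by (simp add: pos_imp_zdiv_pos_iff)
  then have "width n (a, b, c, d) = nat ((int n div gcd (int n) c)\<^sup>2)"
    using conj_Tk_in_Gamma_iff[OF assms] by (intro width_eqI) auto
  then show ?thesis
    by simp
qed

lemma gcd_lower_left_Gamma_mmult:
  assumes "\<gamma> \<in> Gamma n" and "mmult \<gamma> (a0, b0, c0, d0) = (a, b, c, d)"
  shows "gcd (int n) c = gcd (int n) c0"
proof (cases \<gamma>)
  case (fields x y z w)
  let ?N = "int n"
  have "?N\<^sup>2 dvd z" and "w mod ?N = 1 mod ?N \<or> w mod ?N = (-1) mod ?N"
    using assms(1) fields unfolding Gamma_def by auto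
  then obtain z' where z: "z = ?N * z'"
    by (metis dvd_mult_left dvdE power2_eq_square)
  obtain \<epsilon> :: int where "\<epsilon> * \<epsilon> = 1" and "[w = \<epsilon>] (mod ?N)"
    using \<open>w mod ?N = 1 mod ?N \<or> _\<close> unfolding cong_def by force
  then have "[w * \<epsilon> = 1] (mod ?N)"
    by (metis cong_scalar_right)
  then have "coprime w ?N"
    by (auto simp: coprime_iff_invertible_int)
  then have "coprime ?N w"
    by (rule coprime_commute[THEN iffD1])
  have "c = (z' * a0) * ?N + w * c0"
    using assms(2) fields z by (simp add: mmult_def algebra_simps)
  then have "gcd ?N c = gcd ?N (w * c0)"
    by (simp add: gcd_add_mult)
  also have "\<dots> = gcd ?N c0"
    using \<open>coprime ?N w\<close> by (rule gcd_mult_right_left_cancel)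
  finally show ?thesis .
qed

section \<open>Cusps of simple type\<close>

locale simple_cusp =
  fixes n :: nat and m b q e g n1 q1 u :: int
  assumes n_pos: "n \<ge> 1"
    and SL2Z: "(m, b, q, e) \<in> SL2Z"
    and n_eq: "int n = g * n1" and q_eq: "q = g * q1" and g_pos: "g > 0"
    and coprime_q1_n: "coprime q1 (int n)"
    and q1_inverse: "[q1 * u = 1] (mod (int n)\<^sup>2)"
begin

text \<open>The point x'_{c,d} of the statement: the real part of the image of x' + i y' under the
  upper triangular matrix (g d, d e u; 0, (n/d) n1).\<close>
definition shift :: "nat \<Rightarrow> real \<Rightarrow> real" where
  "shift d x = (of_int g * real d * x + of_int (int d * e * u)) / (real (n div d) * of_int n1)"

abbreviation Rpr_point :: "nat \<Rightarrow> nat \<Rightarrow> complex \<Rightarrow> complex" where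
  "Rpr_point d k z \<equiv> Complex (shift d (Re z) + real k / real (n div d)) (real d ^ 2 * Im z / real_of_int (n1\<^sup>2))"

lemma n1_pos: "n1 > 0"
  using zero_less_mult_pos[of g n1] n_pos n_eq g_pos by simp

lemma n_square_factor: "d dvd n \<Longrightarrow> int n * int n = (g * int d) * (int (n div d) * n1)"
  using int_eq_mult_div[of d n] n_eq by (metis mult.assoc mult.commute mult.left_commute)

lemma coprime_q1_factor: "d dvd n \<Longrightarrow> coprime q1 (int (n div d) * n1)"
  using coprime_q1_n n_square_factor[of d] coprime_divisors[OF dvd_refl, of q1 "int n * int n"]
  by (metis coprime_mult_right_iff dvd_triv_right)

lemma factor_lower_right_dvd:
  assumes "d dvd n"
  shows "int (n div d) * n1 dvd int n * e - int (n div d) * q1 * (int d * e * u + n1 * int k)"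
proof -
  define np where "np = int (n div d)"
  obtain w where w: "q1 * u - 1 = int n * int n * w"
    using q1_inverse by (auto simp: cong_iff_dvd_diff power2_eq_square)
  have "int n * e - np * q1 * (int d * e * u + n1 * int k) = - np * int d * e * (q1 * u - 1) - np * n1 * q1 * int k"
    unfolding np_def by (simp add: int_eq_mult_div[OF assms] algebra_simps)
  also have "\<dots> = np * n1 * (- int d * e * int n * g * w - q1 * int k)"
    unfolding w by (simp add: n_eq algebra_simps)
  finally show ?thesis
    unfolding np_def by simp
qed

lemma factor_upper_right_dvd:
  assumes "d dvd n" and "n1 * m + int j * q1 = int d * r"
    and "[q1 * int k * r = -1] (mod int (n div d))"
  shows "int (n div d) * n1 dvd int n * b + int j * e - r * (int d * e * u + n1 * int k)"
proof -
  define np D X where "np = int (n div d)" and "D = np * n1"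
    and "X = int n * b + int j * e - r * (int d * e * u + n1 * int k)"
  obtain w where w: "q1 * u - 1 = int n * int n * w"
    using q1_inverse by (auto simp: cong_iff_dvd_diff power2_eq_square)
  obtain v where v: "q1 * int k * r = np * v - 1"
    using assms(3) unfolding np_def by (auto simp: cong_iff_dvd_diff dvd_def algebra_simps)
  have det: "q * b - m * e = -1"
    using SL2Z unfolding SL2Z_def by (simp add: algebra_simps)
  have "q1 * X - (n1 * (q * b - m * e) - n1 * (q1 * int k * r) - int d * e * r * (q1 * u - 1))
      = e * (n1 * m + int j * q1 - int d * r)"
    unfolding X_def by (simp add: n_eq q_eq algebra_simps)
  then have "q1 * X = n1 * (q * b - m * e) - n1 * (q1 * int k * r) - int d * e * r * (q1 * u - 1)"
    using assms(2) by simp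
  also have "\<dots> = D * (- v - int d * e * r * g * int d * w)"
    unfolding det v w n_square_factor[OF assms(1)] D_def np_def by (simp add: algebra_simps)
  finally have "D dvd q1 * X"
    by simp
  with coprime_q1_factor[OF assms(1)] show ?thesis
    unfolding D_def X_def np_def by (simp add: coprime_commute coprime_dvd_mult_right_iff)
qed

lemma translate_factorization:
  assumes "d dvd n" and "n1 * m + int j * q1 = int d * r"
    and "[q1 * int k * r = -1] (mod int (n div d))"
  shows "\<exists>\<sigma>\<in>SL2Z. mmult \<sigma> (g * int d, int d * e * u + n1 * int k, 0, int (n div d) * n1) =
    mmult (int n, int j, 0, int n) (m, b, q, e)"
proof -
  let ?N = "int n" and ?A = "g * int d" and ?D = "int (n div d) * n1"
  have "?A * ?D \<noteq> 0"
    using n_pos n_square_factor[OF assms(1)] by (metis mult_eq_0_iff of_nat_eq_0_iff not_one_le_zero)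
  moreover have "(?N * m + int j * q) * (?N * e) - (?N * b + int j * e) * (?N * q) = ?A * ?D"
  proof -
    have "(?N * m + int j * q) * (?N * e) - (?N * b + int j * e) * (?N * q) = ?N * ?N * (m * e - b * q)"
      by (simp add: algebra_simps)
    then show ?thesis
      using SL2Z n_square_factor[OF assms(1)] unfolding SL2Z_def by simp
  qed
  moreover have "?N * m + int j * q = r * ?A"
  proof -
    have "?N * m + int j * q = g * (n1 * m + int j * q1)"
      by (simp add: n_eq q_eq algebra_simps)
    then show ?thesis
      unfolding assms(2) by simp
  qed
  moreover have "?N * q = (int (n div d) * q1) * ?A"
    using int_eq_mult_div[OF assms(1)] q_eq by simp
  ultimately have "\<exists>\<sigma>\<in>SL2Z. mmult \<sigma> (?A, int d * e * u + n1 * int k, 0, ?D) =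
      (?N * m + int j * q, ?N * b + int j * e, ?N * q, ?N * e)"
    using factor_upper_right_dvd[OF assms] factor_lower_right_dvd[OF assms(1)] by (rule SL2Z_left_factor)
  then show ?thesis
    by (simp add: mmult_def)
qed

lemma divisor_pos: "d dvd n \<Longrightarrow> d > 0"
  using n_pos by (cases "d = 0") simp_all

lemma quotient_pos: "d dvd n \<Longrightarrow> n div d > 0"
  using n_pos divisor_pos by (simp add: div_greater_zero_iff dvd_imp_le)

lemma mob_factor:
  assumes "d dvd n"
  shows "mob (g * int d, int d * e * u + n1 * int k, 0, int (n div d) * n1) z =
    Rpr_point d k z"
proof -
  define np where "np = n div d"
  have "real_of_int g * real_of_int n1 = real d * real np"
    using n_eq int_eq_mult_div[OF assms] unfolding np_def by (metis of_int_mult of_int_of_nat_eq)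
  moreover have "real d > 0" and "real np > 0" and "real_of_int n1 > 0"
    using divisor_pos[OF assms] quotient_pos[OF assms] n1_pos unfolding np_def
    by simp_all
  ultimately show ?thesis
    unfolding mob_def shift_def np_def[symmetric]
    by (simp add: complex_eq_iff field_simps power2_eq_square)
qed

lemma translate_orbit_eq:
  assumes "Im z > 0" and "d dvd n" and "n1 * m + int j * q1 = int d * r"
    and "[q1 * int k * r = -1] (mod int (n div d))"
  shows "orbit SL2Z (mob (m, b, q, e) z + of_real (real j / real n)) =
    orbit SL2Z (Rpr_point d k z)"
proof -
  let ?P = "(g * int d, int d * e * u + n1 * int k, 0, int (n div d) * n1)"
  obtain \<sigma> where "\<sigma> \<in> SL2Z" and \<sigma>: "mmult \<sigma> ?P = mmult (int n, int j, 0, int n) (m, b, q, e)"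
    using translate_factorization[OF assms(2-4)] by blast
  have "int (n div d) * n1 \<noteq> 0"
    using n1_pos quotient_pos[OF assms(2)] by simp
  have "mob (m, b, q, e) z + of_real (real j / real n) = mob (int n, int j, 0, int n) (mob (m, b, q, e) z)"
    using n_pos by (simp add: mob_def field_simps)
  also have "\<dots> = mob (mmult \<sigma> ?P) z"
    unfolding \<sigma> by (rule mob_mmult_SL2Z[OF SL2Z assms(1), symmetric])
  also have "\<dots> = mob \<sigma> (mob ?P z)"
    using \<open>int (n div d) * n1 \<noteq> 0\<close> by (simp add: mob_mmult)
  finally have "orbit SL2Z (mob (m, b, q, e) z + of_real (real j / real n)) = orbit SL2Z (mob \<sigma> (mob ?P z))"
    by simp
  also have "\<dots> = orbit SL2Z (mob ?P z)"
  proof (rule orbit_SL2Z_mob[OF \<open>\<sigma> \<in> SL2Z\<close>])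
    show "Im (mob ?P z) > 0"
      using assms(1) divisor_pos[OF assms(2)] n1_pos by (simp add: mob_factor[OF assms(2)])
  qed
  finally show ?thesis
    by (simp only: mob_factor[OF assms(2)])
qed

lemma coprime_q1_quotient: "d dvd n \<Longrightarrow> coprime q1 (int (n div d))"
  using coprime_q1_n int_eq_mult_div by (metis coprime_mult_right_iff)

lemma translate_orbit_in_Rpr:
  assumes "Im z > 0" and "j < n"
  obtains d k where "d dvd n" and "k < n div d" and "coprime k (n div d)"
    and "orbit SL2Z (mob (m, b, q, e) z + of_real (real j / real n)) =
      orbit SL2Z (Rpr_point d k z)"
proof -
  define r0 where "r0 = n1 * m + int j * q1"
  define d where "d = nat (gcd r0 (int n))"
  have "int d = gcd r0 (int n)"
    unfolding d_def by simp
  then have "d dvd n" and r0: "r0 = int d * (r0 div int d)"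
    by (metis gcd_dvd2 of_nat_dvd_iff, simp)
  have "int (n div d) = int n div gcd r0 (int n)"
    using \<open>int d = _\<close> by (simp add: zdiv_int)
  then have "coprime (r0 div int d) (int (n div d))"
    using div_gcd_coprime[of r0 "int n"] n_pos \<open>int d = _\<close> by simp
  with coprime_q1_quotient[OF \<open>d dvd n\<close>] have "coprime (q1 * (r0 div int d)) (int (n div d))"
    by simp
  then obtain k where "k < n div d" and k: "[q1 * (r0 div int d) * int k = -1] (mod int (n div d))"
    using cong_solve_coprime_below quotient_pos[OF \<open>d dvd n\<close>] by blast
  have "[- (q1 * (r0 div int d) * int k) = - (- 1)] (mod int (n div d))"
    using k by (simp only: cong_minus_minus_iff)
  then have "[int k * (- (q1 * (r0 div int d))) = 1] (mod int (n div d))"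
    by (simp add: ac_simps)
  then have "coprime k (n div d)"
    by (metis coprime_iff_invertible_int coprime_int_iff)
  have rk: "[q1 * int k * (r0 div int d) = -1] (mod int (n div d))"
    using k by (simp add: ac_simps)
  have rj: "n1 * m + int j * q1 = int d * (r0 div int d)"
    using r0 unfolding r0_def .
  show ?thesis
    by (rule that[OF \<open>d dvd n\<close> \<open>k < n div d\<close> \<open>coprime k (n div d)\<close> translate_orbit_eq[OF assms(1) \<open>d dvd n\<close> rj rk]])
qed

lemma Rpr_orbit_is_translate:
  assumes "Im z > 0" and "d dvd n" and "k < n div d" and "coprime k (n div d)"
  obtains j where "j < n"
    and "orbit SL2Z (Rpr_point d k z) =
      orbit SL2Z (mob (m, b, q, e) z + of_real (real j / real n))"
proof -
  define np where "np = int (n div d)"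
  have "coprime (q1 * int k) np"
    using coprime_q1_quotient[OF assms(2)] assms(4) unfolding np_def by simp
  then obtain x where r0: "[q1 * int k * int x = -1] (mod np)"
    using cong_solve_coprime_below quotient_pos[OF assms(2)] unfolding np_def by blast
  obtain j where "j < n" and "[q1 * int j = int d * int x - n1 * m] (mod int n)"
    using cong_solve_coprime_below[OF coprime_q1_n] n_pos by auto
  then obtain t where t: "q1 * int j - (int d * int x - n1 * m) = int n * t"
    by (auto simp: cong_iff_dvd_diff dvd_def)
  define r where "r = int x + np * t"
  have rj: "n1 * m + int j * q1 = int d * r"
    using t int_eq_mult_div[OF assms(2)] unfolding r_def np_def by (simp add: algebra_simps)
  have rk: "[q1 * int k * r = -1] (mod np)"
  proof -
    have "[q1 * int k * r = q1 * int k * int x] (mod np)"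
      unfolding r_def by (simp add: cong_iff_dvd_diff algebra_simps)
    then show ?thesis
      using r0 by (rule cong_trans)
  qed
  show ?thesis
    by (rule that[OF \<open>j < n\<close> translate_orbit_eq[OF assms(1,2) rj rk[unfolded np_def], symmetric]])
qed

lemma R_mob_eq:
  assumes "Im z > 0"
  shows "R n (Re (mob (m, b, q, e) z)) (Im (mob (m, b, q, e) z)) =
    (\<Union>d\<in>{d. d dvd n}. Rpr (n div d) (shift d (Re z)) (real d ^ 2 * Im z / real_of_int (n1\<^sup>2)))"
proof -
  let ?w = "\<lambda>j. mob (m, b, q, e) z + of_real (real j / real n)"
  let ?P = "{orbit SL2Z (Rpr_point d k z) | d k. d dvd n \<and> k < n div d \<and> coprime k (n div d)}"
  have "{orbit SL2Z (?w j) | j. j < n} = ?P"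
  proof (intro equalityI subsetI)
    fix x
    assume "x \<in> {orbit SL2Z (?w j) | j. j < n}"
    then obtain j where "j < n" and x: "x = orbit SL2Z (?w j)"
      by blast
    obtain d k where "d dvd n" and "k < n div d" and "coprime k (n div d)"
      and "orbit SL2Z (?w j) = orbit SL2Z (Rpr_point d k z)"
      using translate_orbit_in_Rpr[OF assms \<open>j < n\<close>] .
    then show "x \<in> ?P"
      unfolding x by blast
  next
    fix x
    assume "x \<in> ?P"
    then obtain d k where "d dvd n" and "k < n div d" and "coprime k (n div d)"
      and x: "x = orbit SL2Z (Rpr_point d k z)"
      by blast
    then obtain j where "j < n" and "orbit SL2Z (Rpr_point d k z) = orbit SL2Z (?w j)"
      using Rpr_orbit_is_translate[OF assms] by blast
    then show "x \<in> {orbit SL2Z (?w j) | j. j < n}"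
      unfolding x by blast
  qed
  moreover have "(\<Union>d\<in>{d. d dvd n}. Rpr (n div d) (shift d (Re z)) (real d ^ 2 * Im z / real_of_int (n1\<^sup>2))) = ?P"
    unfolding Rpr_def by blast
  ultimately show ?thesis
    unfolding R_conv_translates by simp
qed

end

lemma simple_type_simple_cusp:
  assumes "n \<ge> 1" and "\<tau> \<in> SL2Z" and "simple_type n \<tau>"
  obtains \<gamma> m b q e g n1 q1 u where "\<gamma> \<in> Gamma n" and "mmult \<gamma> \<tau> = (m, b, q, e)"
    and "simple_cusp n m b q e g n1 q1 u" and "real (width n \<tau>) = real_of_int (n1\<^sup>2)"
proof -
  obtain \<gamma> where "\<gamma> \<in> Gamma n"
    and simple: "case mmult \<gamma> \<tau> of (m, b, q, d) \<Rightarrow> gcd (int n ^ 2) q dvd int n"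
    using assms(3) unfolding simple_type_def ..
  obtain m b q e where \<gamma>\<tau>: "mmult \<gamma> \<tau> = (m, b, q, e)"
    by (rule prod_cases4)
  define g n1 q1 where "g = gcd (int n) q" and "n1 = int n div g" and "q1 = q div g"
  have "coprime q1 (int n)"
    using coprime_div_gcd_if_gcd_square_dvd simple \<gamma>\<tau> assms(1) unfolding q1_def g_def by simp
  then have "coprime q1 ((int n)\<^sup>2)"
    by simp
  then obtain u where "[q1 * u = 1] (mod (int n)\<^sup>2)"
    using cong_solve_coprime_int by blast
  with assms(1,2) \<open>\<gamma> \<in> Gamma n\<close> \<gamma>\<tau> \<open>coprime q1 (int n)\<close> have "simple_cusp n m b q e g n1 q1 u"
    by unfold_locales (auto simp: g_def n1_def q1_def intro: SL2Z_mmult Gamma_SL2Z simp flip: \<gamma>\<tau>)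
  moreover have "real (width n \<tau>) = real_of_int (n1\<^sup>2)"
  proof (cases \<tau>)
    case (fields a0 b0 c0 d0)
    then show ?thesis
      using width_SL2Z[OF assms(2)[unfolded fields] assms(1)] gcd_lower_left_Gamma_mmult[OF \<open>\<gamma> \<in> Gamma n\<close> \<gamma>\<tau>[unfolded fields]]
      unfolding n1_def g_def by (metis of_int_of_nat_eq)
  qed
  ultimately show ?thesis
    using that \<open>\<gamma> \<in> Gamma n\<close> \<gamma>\<tau> by blast
qed

theorem proposition7p7:
  fixes n :: nat and \<tau> :: mat2
  assumes "n \<ge> 1" and "\<tau> \<in> SL2Z" and "simple_type n \<tau>"
  shows "\<exists>X :: nat \<Rightarrow> real \<Rightarrow> real. \<forall>z z'. Im z > 0 \<longrightarrow> Im z' > 0 \<longrightarrow>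
           orbit (Gamma n) z = orbit (Gamma n) (mob \<tau> z') \<longrightarrow>
           R n (Re z) (Im z) =
             (\<Union>d\<in>{d. d dvd n}. Rpr (n div d) (X d (Re z')) (real d ^ 2 * Im z' / real (width n \<tau>)))"
proof -
  obtain \<gamma> m b q e g n1 q1 u where "\<gamma> \<in> Gamma n" and \<gamma>\<tau>: "mmult \<gamma> \<tau> = (m, b, q, e)"
    and "simple_cusp n m b q e g n1 q1 u" and width: "real (width n \<tau>) = real_of_int (n1\<^sup>2)"
    using simple_type_simple_cusp[OF assms] .
  interpret simple_cusp n m b q e g n1 q1 u
    by fact
  show ?thesis
  proof (intro exI[of _ shift] allI impI)
    fix z z'
    assume "Im z > 0" and "Im z' > 0" and orbits: "orbit (Gamma n) z = orbit (Gamma n) (mob \<tau> z')"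
    have "Im (mob \<tau> z') > 0"
      using assms(2) \<open>Im z' > 0\<close> by (rule Im_mob_SL2Z_pos)
    then have "R n (Re z) (Im z) = R n (Re (mob \<tau> z')) (Im (mob \<tau> z'))"
      by (rule R_orbit_Gamma_eq[OF assms(1) _ orbits])
    also have "\<dots> = R n (Re (mob \<gamma> (mob \<tau> z'))) (Im (mob \<gamma> (mob \<tau> z')))"
      using \<open>\<gamma> \<in> Gamma n\<close> assms(1) \<open>Im (mob \<tau> z') > 0\<close> by (rule R_Gamma_invariant[symmetric])
    also have "mob \<gamma> (mob \<tau> z') = mob (m, b, q, e) z'"
      unfolding \<gamma>\<tau>[symmetric] by (rule mob_mmult_SL2Z[OF assms(2) \<open>Im z' > 0\<close>, symmetric])
    also have "R n (Re (mob (m, b, q, e) z')) (Im (mob (m, b, q, e) z')) =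
        (\<Union>d\<in>{d. d dvd n}. Rpr (n div d) (shift d (Re z')) (real d ^ 2 * Im z' / real (width n \<tau>)))"
      unfolding width by (rule R_mob_eq[OF \<open>Im z' > 0\<close>])
    finally show "R n (Re z) (Im z) = \<dots>" .
  qed
qed

end
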